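(* Consider the $K$-user time-invariant phase-fading complex Gaussian interference channel with unit per-symbol peak-power constraints described in the context. There exists a constant $c>0$ such that, with probability tending to $1$ as $K\to\infty$ (probability over the random channel phases $\{\Theta_{kj}\}$), the realized channel admits an achievable sum-rate of at least $c\,\frac{\ln K}{\ln\ln K}$. In other words, a sum-rate of $\Omega\!\left(\frac{\ln K}{\ln \ln K}\right)$ is achievable with high probability as $K\to\infty$.
   Context: There are $K$ transmitter-receiver pairs indexed by $[K]=\{1,\dots,K\}$. The channel is: for all $k\in[K]$ and time slots $t\in\mathbb{N}$, $Y_k[t]=\sum_{j=1}^K e^{i\Theta_{kj}}X_j[t]+Z_k[t]$, where $X_j[t]\in\mathbb{C}$ is the signal sent by transmitter $j$, $Y_k[t]$ is the signal received at receiver $k$, the noise $Z_k[t]$ is i.i.d. circularly symmetric complex Gaussian $\mathcal{CN}(0,1)$ (independent over $k,t$), and the phases $\{\Theta_{kj}\}_{k,j\in[K]}$ are drawn independently and uniformly from $[-\pi,\pi)$ once and stay fixed over time (time-invariant channel). All transmitters and receivers know all the phases. Inputs satisfy the peak-power constraint $|X_k[t]|^2\le 1$ for all $k,t$. A code of block length $n$ consists of encoders $f_k(n)$ mapping a message $W_k$, uniform on $\{1,\dots,2^{nR_k}\}$, to $X_k^n\in\mathbb{C}^n$, and decoders $\phi_k(n)$ mapping $Y_k^n$ to an estimate $\hat W_k$. A rate vector $(R_1,\dots,R_K)$ is achievable if there is a sequence of such codes with $\mathbb{P}[\hat W_k\ne W_k]\to 0$ as $n\to\infty$ for every $k$; a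 sum-rate $R_{sum}$ is achievable if $R_{sum}=\sum_k R_k$ for some achievable rate vector. "With high probability" means with probability (over $\{\Theta_{kj}\}$) tending to $1$ as $K\to\infty$. *)

theory Defs
  imports "HOL-Probability.Probability"
begin

text \<open>Users are indexed by 0..K-1 (i.e. the set lessThan K), time slots of a
block of length n by 0..n-1, messages of user k by 0..M_k-1.\<close>

definition cgauss :: "complex measure" where
  "cgauss = density lborel (\<lambda>z. ennreal (exp (- ((cmod z) ^ 2)) / pi))"

definition noise :: "nat \<Rightarrow> (nat \<Rightarrow> complex) measure" where
  "noise n = PiM {..<n} (\<lambda>_. cgauss)"

definition msg_size :: "nat \<Rightarrow> real \<Rightarrow> nat" where
  "msg_size n r = nat \<lceil>2 powr (real n * r)\<rceil>"

text \<open>A code of block length n for K users with message-set sizes M: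
encoders enc k w t (signal of transmitter k for message w at time t)
satisfying the peak-power constraint, and (measurable) decoders dec k.\<close>
definition is_code ::
  "nat \<Rightarrow> nat \<Rightarrow> (nat \<Rightarrow> nat) \<Rightarrow> (nat \<Rightarrow> nat \<Rightarrow> nat \<Rightarrow> complex)
   \<Rightarrow> (nat \<Rightarrow> (nat \<Rightarrow> complex) \<Rightarrow> nat) \<Rightarrow> bool" where
  "is_code K n M enc dec \<longleftrightarrow>
     (\<forall>k<K. \<forall>w<M k. \<forall>t<n. (cmod (enc k w t)) ^ 2 \<le> 1) \<and>
     (\<forall>k<K. dec k \<in> measurable (PiM {..<n} (\<lambda>_. borel)) (count_space UNIV))"

definition received ::
  "(nat \<times> nat \<Rightarrow> real) \<Rightarrow> nat \<Rightarrow> nat \<Rightarrow> (nat \<Rightarrow> nat \<Rightarrow> nat \<Rightarrow> complex)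
   \<Rightarrow> (nat \<Rightarrow> nat) \<Rightarrow> nat \<Rightarrow> (nat \<Rightarrow> complex) \<Rightarrow> (nat \<Rightarrow> complex)" where
  "received \<theta> K n enc w k z =
     restrict (\<lambda>t. (\<Sum>j<K. cis (\<theta> (k, j)) * enc j (w j) t) + z t) {..<n}"

definition err_prob ::
  "(nat \<times> nat \<Rightarrow> real) \<Rightarrow> nat \<Rightarrow> nat \<Rightarrow> (nat \<Rightarrow> nat) \<Rightarrow> (nat \<Rightarrow> nat \<Rightarrow> nat \<Rightarrow> complex)
   \<Rightarrow> (nat \<Rightarrow> (nat \<Rightarrow> complex) \<Rightarrow> nat) \<Rightarrow> nat \<Rightarrow> real" where
  "err_prob \<theta> K n M enc dec k =
     (\<Sum>w\<in>PiE {..<K} (\<lambda>j. {..<M j}).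
        measure (noise n) {z \<in> space (noise n). dec k (received \<theta> K n enc w k z) \<noteq> w k})
     / (\<Prod>j<K. real (M j))"

definition achievable_rates :: "(nat \<times> nat \<Rightarrow> real) \<Rightarrow> nat \<Rightarrow> (nat \<Rightarrow> real) \<Rightarrow> bool" where
  "achievable_rates \<theta> K R \<longleftrightarrow> (\<forall>k<K. 0 \<le> R k) \<and>
     (\<exists>enc dec. (\<forall>n. is_code K n (\<lambda>k. msg_size n (R k)) (enc n) (dec n)) \<and>
        (\<forall>k<K. (\<lambda>n. err_prob \<theta> K n (\<lambda>k. msg_size n (R k)) (enc n) (dec n) k)
                  \<longlonglongrightarrow> 0))"

definition achievable_sum_rate :: "(nat \<times> nat \<Rightarrow> real) \<Rightarrow> nat \<Rightarrow> real \<Rightarrow> bool" where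
  "achievable_sum_rate \<theta> K S \<longleftrightarrow> (\<exists>R. achievable_rates \<theta> K R \<and> (\<Sum>k<K. R k) = S)"

definition phase_measure :: "nat \<Rightarrow> (nat \<times> nat \<Rightarrow> real) measure" where
  "phase_measure K = PiM ({..<K} \<times> {..<K}) (\<lambda>_. uniform_measure lborel {-pi..<pi})"

end

theory Submission
  imports Defs "HOL-Real_Asymp.Real_Asymp"
begin

text \<open>With high probability one can pick \<open>m \<approx> ln K / (8 ln ln K)\<close> users whose direct phases
  lie in \<open>[0, 1/2]\<close> and whose mutual cross phases lie within \<open>1/(4m)\<close> of \<open>\<pi>/2\<close>. A greedy
  selection adds one user at a time; it gets stuck only if, for one of at most \<open>m K\<^sup>m\<close> partial
  selections, each of the \<open>K - m\<close> remaining users misses one of its at most \<open>2m\<close> target arcs.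
  These misses are independent and each has probability at most
  \<open>1 - (8 \<pi> m)\<^sup>-\<^sup>2\<^sup>m \<le> 1 - K\<^sup>-\<^sup>1\<^sup>/\<^sup>2\<close>, so getting stuck is unlikely.

  The selected users transmit BPSK codewords of a binary code of rate \<open>1/64\<close> and relative
  distance \<open>1/8\<close> (Gilbert-Varshamov), all others are silent. At a selected receiver the real
  part of the signal carries the own symbol with gain at least \<open>3/4\<close>, interference of total
  weight at most \<open>1/4\<close>, and Gaussian noise, so a correlation decoder errs only if the noise
  beats a linear margin; a Chernoff bound makes the error probability vanish. The sum rate
  is \<open>m/64\<close>.\<close>

section \<open>Gaussian noise\<close>

lemma nn_integral_lborel_exp_linear_minus_square:
  "(\<integral>\<^sup>+x. ennreal (exp (c * x - x\<^sup>2) / sqrt pi) \<partial>lborel) = ennreal (exp (c\<^sup>2 / 4))"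
proof -
  have density: "exp (c * x - x\<^sup>2) / sqrt pi = exp (c\<^sup>2 / 4) * normal_density (c / 2) (1 / sqrt 2) x"
    for x
  proof -
    have "exp (c * x - x\<^sup>2) = exp (c\<^sup>2 / 4) * exp (- (x - c / 2)\<^sup>2)"
      by (subst exp_add[symmetric]) (simp add: power2_eq_square algebra_simps)
    moreover have "normal_density (c / 2) (1 / sqrt 2) x = exp (- (x - c / 2)\<^sup>2) / sqrt pi"
      by (simp add: normal_density_def power_divide)
    ultimately show ?thesis by simp
  qed
  have "(\<integral>\<^sup>+x. ennreal (exp (c * x - x\<^sup>2) / sqrt pi) \<partial>lborel)
      = ennreal (exp (c\<^sup>2 / 4)) * (\<integral>\<^sup>+x. ennreal (normal_density (c / 2) (1 / sqrt 2) x) \<partial>lborel)"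
    by (simp add: density ennreal_mult nn_integral_cmult)
  also have "(\<integral>\<^sup>+x. ennreal (normal_density (c / 2) (1 / sqrt 2) x) \<partial>lborel) = 1"
    by (subst nn_integral_eq_integral) auto
  finally show ?thesis by simp
qed

text \<open>The density of \<open>cgauss\<close> splits into two one-dimensional Gaussians,
  one of them tilted by \<open>exp (a * x)\<close>.\<close>
lemma nn_integral_cgauss_exp_Re:
  "(\<integral>\<^sup>+z. ennreal (exp (a * Re z)) \<partial>cgauss) = ennreal (exp (a\<^sup>2 / 4))"
proof -
  define f where "f b x = exp ((if b = 1 then a else 0) * x - x\<^sup>2) / sqrt pi"
    for b :: complex and x :: real
  have split: "exp (- (cmod z)\<^sup>2) / pi * exp (a * Re z) = (\<Prod>b\<in>Basis. f b (z \<bullet> b))" for z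
    by (simp add: Basis_complex_def f_def cmod_power2 exp_add[symmetric] exp_diff algebra_simps)
  have "(\<integral>\<^sup>+z. ennreal (exp (a * Re z)) \<partial>cgauss)
      = (\<integral>\<^sup>+z. ennreal (exp (- (cmod z)\<^sup>2) / pi * exp (a * Re z)) \<partial>lborel)"
    unfolding cgauss_def by (subst nn_integral_density) (auto simp: ennreal_mult[symmetric])
  also have "\<dots> = (\<integral>\<^sup>+z. (\<Prod>b\<in>Basis. ennreal (f b (z \<bullet> b))) \<partial>lborel)"
    unfolding split by (subst prod_ennreal) (auto simp: f_def)
  also have "\<dots> = (\<Prod>b\<in>Basis. (\<integral>\<^sup>+x. ennreal (f b x) \<partial>lborel))"
    by (rule nn_integral_lborel_prod) (auto simp: f_def)
  also have "\<dots> = ennreal (exp (a\<^sup>2 / 4))"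
    using nn_integral_lborel_exp_linear_minus_square[of a]
      nn_integral_lborel_exp_linear_minus_square[of 0]
    by (simp add: Basis_complex_def f_def)
  finally show ?thesis .
qed

lemma prob_space_cgauss: "prob_space cgauss"
  by standard (use nn_integral_cgauss_exp_Re[of 0] in simp)

lemma sets_cgauss [simp, measurable_cong]: "sets cgauss = sets borel"
  by (simp add: cgauss_def)

lemma prob_space_noise: "prob_space (noise n)"
  unfolding noise_def by (rule prob_space_PiM) (rule prob_space_cgauss)

lemma nn_integral_noise_exp_signed_sum:
  assumes D: "D \<subseteq> {..<n}" and sign: "\<And>t. t \<in> D \<Longrightarrow> \<bar>\<sigma> t\<bar> = 1"
  shows "(\<integral>\<^sup>+z. ennreal (exp (\<Sum>t\<in>D. \<sigma> t * Re (z t))) \<partial>noise n)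
           = ennreal (exp (real (card D) / 4))"
proof -
  interpret cgauss: prob_space cgauss by (rule prob_space_cgauss)
  interpret product_sigma_finite "\<lambda>_::nat. cgauss" by standard
  define h where "h t x = (if t \<in> D then ennreal (exp (\<sigma> t * Re x)) else 1)" for t x
  have finite_D: "finite D" using D finite_subset by blast
  have sign_square: "\<sigma> t * \<sigma> t = 1" if "t \<in> D" for t
    using sign[OF that] abs_mult_self_eq[of "\<sigma> t"] by simp
  have "exp (\<Sum>t\<in>D. \<sigma> t * Re (z t)) = (\<Prod>t\<in>D. exp (\<sigma> t * Re (z t)))" for z :: "nat \<Rightarrow> complex"
    by (simp add: exp_sum finite_D)
  then have factor: "ennreal (exp (\<Sum>t\<in>D. \<sigma> t * Re (z t))) = (\<Prod>t<n. h t (z t))" for z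
    using D by (simp add: h_def prod.If_cases Int_absorb1 prod_ennreal)
  have "(\<integral>\<^sup>+z. ennreal (exp (\<Sum>t\<in>D. \<sigma> t * Re (z t))) \<partial>noise n)
      = (\<Prod>t<n. \<integral>\<^sup>+x. h t x \<partial>cgauss)"
    unfolding factor noise_def by (rule product_nn_integral_prod) (auto simp: h_def)
  also have "\<dots> = (\<Prod>t<n. if t \<in> D then ennreal (exp (1 / 4)) else 1)"
    using nn_integral_cgauss_exp_Re sign_square
    by (intro prod.cong) (auto simp: h_def cgauss.emeasure_space_1 power2_eq_square)
  also have "\<dots> = ennreal (exp (1 / 4)) ^ card D"
    using D by (simp add: prod.If_cases Int_absorb1)
  also have "\<dots> = ennreal (exp (real (card D) / 4))"
    by (simp add: ennreal_power exp_of_nat_mult[symmetric])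
  finally show ?thesis .
qed

text \<open>Chernoff bound with the exponential moment at parameter 1.\<close>
lemma noise_signed_sum_tail:
  assumes D: "D \<subseteq> {..<n}" and sign: "\<And>t. t \<in> D \<Longrightarrow> \<bar>\<sigma> t\<bar> = 1"
  shows "measure (noise n) {z \<in> space (noise n). real (card D) / 2 \<le> (\<Sum>t\<in>D. \<sigma> t * Re (z t))}
           \<le> exp (- real (card D) / 4)"
proof -
  interpret noise: prob_space "noise n" by (rule prob_space_noise)
  let ?S = "\<lambda>z. \<Sum>t\<in>D. \<sigma> t * Re (z t)"
  let ?A = "{z \<in> space (noise n). real (card D) / 2 \<le> ?S z}"
  have A: "?A \<in> sets (noise n)" unfolding noise_def by measurable (use D in auto)
  have "emeasure (noise n) ?A = (\<integral>\<^sup>+z. indicator ?A z \<partial>noise n)"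
    using A by simp
  also have "\<dots> \<le> (\<integral>\<^sup>+z. ennreal (exp (- real (card D) / 2)) * ennreal (exp (?S z)) \<partial>noise n)"
  proof (rule nn_integral_mono)
    fix z
    have "z \<in> ?A \<Longrightarrow> 1 \<le> exp (- real (card D) / 2) * exp (?S z)"
      by (simp flip: exp_add)
    then show "indicator ?A z \<le> ennreal (exp (- real (card D) / 2)) * ennreal (exp (?S z))"
      by (auto simp: indicator_def simp flip: ennreal_mult)
  qed
  also have "\<dots> = ennreal (exp (- real (card D) / 2)) * (\<integral>\<^sup>+z. ennreal (exp (?S z)) \<partial>noise n)"
    by (rule nn_integral_cmult) (unfold noise_def, measurable, use D in auto)
  also have "\<dots> = ennreal (exp (- real (card D) / 2)) * ennreal (exp (real (card D) / 4))"
    by (simp only: nn_integral_noise_exp_signed_sum[OF D sign])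
  also have "\<dots> = ennreal (exp (- real (card D) / 4))"
    by (simp flip: ennreal_mult exp_add)
  finally show ?thesis by (simp add: noise.emeasure_eq_measure)
qed

section \<open>Binary codes\<close>

definition hamming_dist :: "nat \<Rightarrow> (nat \<Rightarrow> bool) \<Rightarrow> (nat \<Rightarrow> bool) \<Rightarrow> nat" where
  "hamming_dist n a b = card {t\<in>{..<n}. a t \<noteq> b t}"

abbreviation binary_words :: "nat \<Rightarrow> (nat \<Rightarrow> bool) set" where
  "binary_words n \<equiv> PiE {..<n} (\<lambda>_. UNIV)"

definition code_min_dist :: "nat \<Rightarrow> nat \<Rightarrow> nat \<Rightarrow> (nat \<Rightarrow> nat \<Rightarrow> bool) \<Rightarrow> bool" where
  "code_min_dist n d N f \<longleftrightarrow> (\<forall>w<N. \<forall>w'<N. w \<noteq> w' \<longrightarrow> d \<le> hamming_dist n (f w) (f w'))"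

lemma hamming_dist_commute: "hamming_dist n a b = hamming_dist n b a"
  unfolding hamming_dist_def by (metis)

lemma card_hamming_ball_le:
  "card {b\<in>binary_words n. hamming_dist n a b < d} \<le> (\<Sum>i<d. n choose i)"
proof -
  let ?ball = "{b\<in>binary_words n. hamming_dist n a b < d}"
  let ?diff = "\<lambda>b. {t\<in>{..<n}. a t \<noteq> b t}"
  have "inj_on ?diff ?ball"
  proof (rule inj_onI)
    fix b c assume b: "b \<in> ?ball" and c: "c \<in> ?ball" and eq: "?diff b = ?diff c"
    have "b t = c t" if "t < n" for t
      using eq[THEN eqset_imp_iff, of t] that by auto
    with b c show "b = c"
      by (intro PiE_ext[of b "{..<n}" "\<lambda>_. UNIV" c]) auto
  qed
  moreover have "?diff ` ?ball \<subseteq> (\<Union>i<d. {D. D \<subseteq> {..<n} \<and> card D = i})"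
    by (auto simp: hamming_dist_def)
  ultimately have "card ?ball \<le> card (\<Union>i<d. {D. D \<subseteq> {..<n} \<and> card D = i})"
    by (intro card_inj_on_le) auto
  also have "\<dots> \<le> (\<Sum>i<d. card {D. D \<subseteq> {..<n} \<and> card D = i})"
    by (rule card_UN_le) simp
  finally show ?thesis by (simp add: n_subsets)
qed

lemma sum_binomial_less_le:
  assumes "1 \<le> r"
  shows "(\<Sum>i<d. real (n choose i)) \<le> r ^ d * (1 + 1 / r) ^ n"
proof -
  have "(\<Sum>i<d. real (n choose i)) \<le> (\<Sum>i<d. r ^ d * (real (n choose i) * (1 / r) ^ i))"
  proof (rule sum_mono)
    fix i assume "i \<in> {..<d}"
    then have "r ^ i \<le> r ^ d" using assms by (intro power_increasing) auto
    then have "r ^ i * real (n choose i) \<le> r ^ d * real (n choose i)"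
      by (rule mult_right_mono) simp
    then show "real (n choose i) \<le> r ^ d * (real (n choose i) * (1 / r) ^ i)"
      using assms by (simp add: power_one_over field_simps)
  qed
  also have "\<dots> = r ^ d * (\<Sum>i<d. real (n choose i) * (1 / r) ^ i)"
    by (simp add: sum_distrib_left)
  also have "(\<Sum>i<d. real (n choose i) * (1 / r) ^ i) \<le> (\<Sum>i\<le>n. real (n choose i) * (1 / r) ^ i)"
  proof -
    have "(\<Sum>i<d. real (n choose i) * (1 / r) ^ i)
        = (\<Sum>i\<in>{..<d} \<inter> {..n}. real (n choose i) * (1 / r) ^ i)"
      by (rule sum.mono_neutral_right) auto
    also have "\<dots> \<le> (\<Sum>i\<le>n. real (n choose i) * (1 / r) ^ i)"
      using assms by (intro sum_mono2) auto
    finally show ?thesis .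
  qed
  also have "(\<Sum>i\<le>n. real (n choose i) * (1 / r) ^ i) = (1 + 1 / r) ^ n"
    using binomial_ring[of "1 / r" 1 n] by (simp add: add.commute)
  finally show ?thesis
    using assms by (simp add: mult_left_mono)
qed

text \<open>Greedy construction: as long as the Hamming balls of radius \<open>d\<close> around the codewords
  chosen so far do not cover all words, another codeword can be added.\<close>
theorem gilbert_varshamov:
  assumes "N * (\<Sum>i<d. n choose i) \<le> 2 ^ n" and "0 < d"
  shows "\<exists>f. (\<forall>w<N. f w \<in> binary_words n) \<and> code_min_dist n d N f"
  using assms(1)
proof (induction N)
  case 0
  show ?case by (simp add: code_min_dist_def)
next
  case (Suc N)
  let ?V = "\<Sum>i<d. n choose i"
  obtain f where words: "\<forall>w<N. f w \<in> binary_words n" and dist: "code_min_dist n d N f"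
    using Suc by auto
  let ?covered = "\<Union>w<N. {b\<in>binary_words n. hamming_dist n (f w) b < d}"
  have "1 \<le> ?V"
    using \<open>0 < d\<close> by (simp add: sum.remove[of "{..<d}" 0])
  have "card ?covered \<le> (\<Sum>w<N. card {b\<in>binary_words n. hamming_dist n (f w) b < d})"
    by (rule card_UN_le) simp
  also have "\<dots> \<le> (\<Sum>w<N. ?V)"
    by (intro sum_mono card_hamming_ball_le)
  also have "\<dots> < card (binary_words n)"
    using Suc.prems \<open>1 \<le> ?V\<close> by (simp add: card_PiE)
  finally have "\<not> binary_words n \<subseteq> ?covered"
    using card_mono[of ?covered "binary_words n"] by (auto simp: finite_PiE)
  then obtain y where "y \<in> binary_words n" "y \<notin> ?covered"
    by blast
  then have y: "y \<in> binary_words n" "\<And>w. w < N \<Longrightarrow> d \<le> hamming_dist n (f w) y"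
    by (auto simp: not_less)
  have "code_min_dist n d (Suc N) (f(N := y))"
    using dist y(2) by (auto simp: code_min_dist_def less_Suc_eq hamming_dist_commute)
  moreover have "\<forall>w<Suc N. (f(N := y)) w \<in> binary_words n"
    using words y(1) by (auto simp: less_Suc_eq)
  ultimately show ?case
    by blast
qed

abbreviation codebook_size :: "nat \<Rightarrow> nat" where
  "codebook_size n \<equiv> msg_size n (1 / 64)"

text \<open>Only block lengths \<open>n \<ge> 8\<close> matter; for smaller \<open>n\<close> the choice may be arbitrary.\<close>
definition codebook :: "nat \<Rightarrow> nat \<Rightarrow> nat \<Rightarrow> bool" where
  "codebook n = (SOME f. code_min_dist n (n div 8) (codebook_size n) f)"

lemma msg_size_pos: "0 < msg_size n r"
  by (simp add: msg_size_def)

lemma codebook_size_le: "real (codebook_size n) \<le> 2 powr (real n / 64) + 1"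
  unfolding msg_size_def by (simp add: ceiling_le_zero)

lemma nine_eighths_power_le: "(9 / 8 :: real) ^ n \<le> 2 powr (real n / 4)"
proof -
  have "(9 / 8 :: real) ^ n = (9 / 8) powr (4 * (real n / 4))"
    by (simp add: powr_realpow)
  also have "\<dots> = ((9 / 8) powr 4) powr (real n / 4)"
    by (rule powr_powr[symmetric])
  also have "\<dots> \<le> 2 powr (real n / 4)"
    by (intro powr_mono2) (auto simp: powr_numeral power_divide)
  finally show ?thesis .
qed

lemma codebook_min_dist:
  assumes "8 \<le> n"
  shows "code_min_dist n (n div 8) (codebook_size n) (codebook n)"
proof -
  have "2 powr (3 * real (n div 8)) = (2 powr 3) powr real (n div 8)"
    by (rule powr_powr[symmetric])
  then have "(8::real) ^ (n div 8) = 2 powr (3 * real (n div 8))"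
    by (simp add: powr_realpow powr_numeral)
  also have "\<dots> \<le> 2 powr (3 * real n / 8)"
    using of_nat_div_le_of_nat[of n 8, where 'a = real] by (intro powr_mono) auto
  finally have "8 ^ (n div 8) * (9 / 8) ^ n \<le> 2 powr (3 * real n / 8) * 2 powr (real n / 4)"
    using nine_eighths_power_le[of n] by (intro mult_mono) auto
  then have "real (\<Sum>i<n div 8. n choose i) \<le> 2 powr (3 * real n / 8) * 2 powr (real n / 4)"
    using sum_binomial_less_le[where r = 8 and d = "n div 8" and n = n] by simp
  moreover have "real (codebook_size n) \<le> 2 powr (real n / 64 + 1)"
    using codebook_size_le[of n] ge_one_powr_ge_zero[of 2 "real n / 64"] by (simp add: powr_add)
  ultimately have "real (codebook_size n) * real (\<Sum>i<n div 8. n choose i)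
      \<le> 2 powr (real n / 64 + 1) * (2 powr (3 * real n / 8) * 2 powr (real n / 4))"
    by (intro mult_mono) (auto simp: sum_nonneg)
  also have "\<dots> \<le> 2 powr real n"
    using assms by (simp flip: powr_add)
  finally have "real (codebook_size n * (\<Sum>i<n div 8. n choose i)) \<le> real (2 ^ n)"
    by (simp add: powr_realpow)
  then have "codebook_size n * (\<Sum>i<n div 8. n choose i) \<le> 2 ^ n"
    by (simp only: of_nat_le_iff)
  moreover have "0 < n div 8"
    using assms by simp
  ultimately obtain f where "code_min_dist n (n div 8) (codebook_size n) f"
    using gilbert_varshamov by blast
  then show ?thesis
    unfolding codebook_def by (rule someI[where P = "code_min_dist n (n div 8) (codebook_size n)"])
qed

section \<open>Signalling with a binary code\<close>

definition bpsk :: "bool \<Rightarrow> real" where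
  "bpsk b = (if b then 1 else -1)"

definition bpsk_encoder :: "nat set \<Rightarrow> nat \<Rightarrow> nat \<Rightarrow> nat \<Rightarrow> nat \<Rightarrow> complex" where
  "bpsk_encoder S n k w t = (if k \<in> S then complex_of_real (bpsk (codebook n w t)) else 0)"

definition correlation :: "nat \<Rightarrow> nat \<Rightarrow> (nat \<Rightarrow> complex) \<Rightarrow> real" where
  "correlation n w y = (\<Sum>t<n. bpsk (codebook n w t) * Re (y t))"

text \<open>Users outside \<open>S\<close> are silent and have the single message \<open>0\<close>.\<close>
definition correlation_decoder :: "nat set \<Rightarrow> nat \<Rightarrow> nat \<Rightarrow> (nat \<Rightarrow> complex) \<Rightarrow> nat" where
  "correlation_decoder S n k y =
     (if k \<in> S
      then LEAST w. w < codebook_size n \<and> (\<forall>w'<codebook_size n. correlation n w' y \<le> correlation n w y)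
      else 0)"

definition rate_on :: "nat set \<Rightarrow> nat \<Rightarrow> real" where
  "rate_on S k = (if k \<in> S then 1 / 64 else 0)"

definition weak_interference :: "(nat \<times> nat \<Rightarrow> real) \<Rightarrow> nat set \<Rightarrow> bool" where
  "weak_interference \<theta> S \<longleftrightarrow>
     (\<forall>k\<in>S. 3 / 4 \<le> cos (\<theta> (k, k)) \<and> (\<Sum>j\<in>S - {k}. \<bar>cos (\<theta> (k, j))\<bar>) \<le> 1 / 4)"

lemma abs_bpsk [simp]: "\<bar>bpsk b\<bar> = 1"
  by (simp add: bpsk_def)

lemma bpsk_mult_self [simp]: "bpsk b * bpsk b = 1"
  by (simp add: bpsk_def)

lemma msg_size_0: "msg_size n 0 = 1"
  by (simp add: msg_size_def)

lemma Re_received_bpsk: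
  assumes "S \<subseteq> {..<K}" and "k \<in> S" and "t < n"
  shows "Re (received \<theta> K n (bpsk_encoder S n) w k z t)
     = cos (\<theta> (k, k)) * bpsk (codebook n (w k) t)
       + (\<Sum>j\<in>S - {k}. cos (\<theta> (k, j)) * bpsk (codebook n (w j) t)) + Re (z t)"
proof -
  have "Re (received \<theta> K n (bpsk_encoder S n) w k z t)
      = (\<Sum>j<K. Re (cis (\<theta> (k, j)) * bpsk_encoder S n j (w j) t)) + Re (z t)"
    using assms(3) by (simp add: received_def Re_sum)
  also have "(\<Sum>j<K. Re (cis (\<theta> (k, j)) * bpsk_encoder S n j (w j) t))
      = (\<Sum>j\<in>S. cos (\<theta> (k, j)) * bpsk (codebook n (w j) t))"
    using assms(1) by (subst sum.mono_neutral_right[of "{..<K}" S]) (auto simp: bpsk_encoder_def)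
  also have "\<dots> = cos (\<theta> (k, k)) * bpsk (codebook n (w k) t)
      + (\<Sum>j\<in>S - {k}. cos (\<theta> (k, j)) * bpsk (codebook n (w j) t))"
    using assms(1,2) finite_subset[OF assms(1)] by (subst sum.remove[of S k]) auto
  finally show ?thesis .
qed

text \<open>One position of a correlation difference: gain \<open>3/4\<close> against interference \<open>1/4\<close>
  leaves a margin of \<open>1\<close>.\<close>
lemma bpsk_flip_gain_le:
  assumes "3 / 4 \<le> g" and "\<bar>I\<bar> \<le> 1 / 4" and "a \<noteq> b"
  shows "(bpsk b - bpsk a) * (g * bpsk a + I + x) \<le> -1 + 2 * (- bpsk a * x)"
proof -
  have "bpsk b = - bpsk a"
    using assms(3) by (cases a; cases b) (auto simp: bpsk_def)
  then have "(bpsk b - bpsk a) * (g * bpsk a + I + x)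
      = -2 * g * (bpsk a * bpsk a) - 2 * (bpsk a * I) - 2 * (bpsk a * x)"
    by (simp add: algebra_simps)
  moreover have "\<bar>bpsk a * I\<bar> \<le> 1 / 4"
    using assms(2) by (simp add: abs_mult)
  ultimately show ?thesis
    using assms(1) by (simp add: abs_le_iff)
qed

definition disagreement :: "nat \<Rightarrow> nat \<Rightarrow> nat \<Rightarrow> nat set" where
  "disagreement n v w = {t\<in>{..<n}. codebook n w t \<noteq> codebook n v t}"

text \<open>The noise event that can make codeword \<open>w\<close> look at least as good as the sent \<open>v\<close>.\<close>
definition confusion_event :: "nat \<Rightarrow> nat \<Rightarrow> nat \<Rightarrow> (nat \<Rightarrow> complex) set" where
  "confusion_event n v w = {z \<in> space (noise n).
     real (card (disagreement n v w)) / 2 \<le> (\<Sum>t\<in>disagreement n v w. - bpsk (codebook n v t) * Re (z t))}"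

lemma sets_confusion_event [measurable]: "confusion_event n v w \<in> sets (noise n)"
  unfolding confusion_event_def noise_def by measurable (auto simp: disagreement_def)

lemma measure_confusion_event_le:
  "measure (noise n) (confusion_event n v w) \<le> exp (- real (card (disagreement n v w)) / 4)"
  unfolding confusion_event_def by (rule noise_signed_sum_tail) (auto simp: disagreement_def)

lemma correlation_gain_le:
  fixes n :: nat and w :: "nat \<Rightarrow> nat" and z :: "nat \<Rightarrow> complex"
  assumes S: "S \<subseteq> {..<K}" and k: "k \<in> S" and weak: "weak_interference \<theta> S"
  defines "y \<equiv> received \<theta> K n (bpsk_encoder S n) w k z"
  shows "correlation n v y - correlation n (w k) y
    \<le> - real (card (disagreement n (w k) v))
      + 2 * (\<Sum>t\<in>disagreement n (w k) v. - bpsk (codebook n (w k) t) * Re (z t))"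
proof -
  let ?D = "disagreement n (w k) v"
  define I where "I t = (\<Sum>j\<in>S - {k}. cos (\<theta> (k, j)) * bpsk (codebook n (w j) t))" for t
  have "\<bar>I t\<bar> \<le> (\<Sum>j\<in>S - {k}. \<bar>cos (\<theta> (k, j)) * bpsk (codebook n (w j) t)\<bar>)" for t
    unfolding I_def by (rule sum_abs)
  then have "\<bar>I t\<bar> \<le> (\<Sum>j\<in>S - {k}. \<bar>cos (\<theta> (k, j))\<bar>)" for t
    by (simp add: abs_mult)
  then have interference: "\<bar>I t\<bar> \<le> 1 / 4" for t
    using weak k unfolding weak_interference_def by (meson order.trans)
  have "correlation n v y - correlation n (w k) y
      = (\<Sum>t\<in>?D. (bpsk (codebook n v t) - bpsk (codebook n (w k) t)) * Re (y t))"
    unfolding correlation_def sum_subtractf[symmetric] left_diff_distrib[symmetric]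
    by (rule sum.mono_neutral_right) (auto simp: disagreement_def)
  also have "\<dots> \<le> (\<Sum>t\<in>?D. -1 + 2 * (- bpsk (codebook n (w k) t) * Re (z t)))"
  proof (rule sum_mono)
    fix t assume "t \<in> ?D"
    then have "t < n" and "codebook n (w k) t \<noteq> codebook n v t"
      by (auto simp: disagreement_def)
    then show "(bpsk (codebook n v t) - bpsk (codebook n (w k) t)) * Re (y t)
        \<le> -1 + 2 * (- bpsk (codebook n (w k) t) * Re (z t))"
      using bpsk_flip_gain_le interference[of t] weak k Re_received_bpsk[OF S k]
      unfolding y_def I_def weak_interference_def by simp
  qed
  also have "\<dots> = - real (card ?D) + 2 * (\<Sum>t\<in>?D. - bpsk (codebook n (w k) t) * Re (z t))"
    by (simp add: sum_subtractf sum.distrib sum_distrib_left sum_negf)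
  finally show ?thesis .
qed

lemma correlation_decoder_maximal:
  assumes "k \<in> S"
  shows "correlation_decoder S n k y < codebook_size n"
    and "\<And>w. w < codebook_size n \<Longrightarrow> correlation n w y \<le> correlation n (correlation_decoder S n k y) y"
proof -
  let ?P = "\<lambda>v. v < codebook_size n \<and> (\<forall>w<codebook_size n. correlation n w y \<le> correlation n v y)"
  let ?max = "Max ((\<lambda>w. correlation n w y) ` {..<codebook_size n})"
  have "?max \<in> (\<lambda>w. correlation n w y) ` {..<codebook_size n}"
    using msg_size_pos by (intro Max_in) auto
  then obtain v where "v < codebook_size n" and "correlation n v y = ?max"
    by auto
  then have "?P v"
    by simp
  then have "?P (LEAST v. ?P v)" by (rule LeastI)
  with assms show "correlation_decoder S n k y < codebook_size n"
    and "\<And>w. w < codebook_size n \<Longrightarrow> correlation n w y \<le> correlation n (correlation_decoder S n k y) y"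
    by (simp_all add: correlation_decoder_def)
qed

lemma decoding_error_subset:
  assumes "S \<subseteq> {..<K}" and "k \<in> S" and "weak_interference \<theta> S" and "w k < codebook_size n"
  shows "{z \<in> space (noise n). correlation_decoder S n k (received \<theta> K n (bpsk_encoder S n) w k z) \<noteq> w k}
     \<subseteq> (\<Union>v\<in>{..<codebook_size n} - {w k}. confusion_event n (w k) v)"
proof
  fix z
  assume z: "z \<in> {z \<in> space (noise n).
    correlation_decoder S n k (received \<theta> K n (bpsk_encoder S n) w k z) \<noteq> w k}"
  let ?y = "received \<theta> K n (bpsk_encoder S n) w k z"
  let ?v = "correlation_decoder S n k ?y"
  have "0 \<le> correlation n ?v ?y - correlation n (w k) ?y"
    using correlation_decoder_maximal(2)[OF assms(2) assms(4)] by simp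
  then have "z \<in> confusion_event n (w k) ?v"
    using correlation_gain_le[OF assms(1-3), where n = n and v = ?v and w = w and z = z] z
    by (simp add: confusion_event_def)
  then show "z \<in> (\<Union>v\<in>{..<codebook_size n} - {w k}. confusion_event n (w k) v)"
    using correlation_decoder_maximal(1)[OF assms(2)] z by auto
qed

lemma err_prob_le:
  assumes "\<And>w. w \<in> PiE {..<K} (\<lambda>j. {..<M j}) \<Longrightarrow>
      measure (noise n) {z \<in> space (noise n). dec k (received \<theta> K n enc w k z) \<noteq> w k} \<le> \<epsilon>"
    and "\<And>j. 0 < M j"
  shows "err_prob \<theta> K n M enc dec k \<le> \<epsilon>"
proof -
  have card: "real (card (PiE {..<K} (\<lambda>j. {..<M j}))) = (\<Prod>j<K. real (M j))"
    by (simp add: card_PiE)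
  have "0 < (\<Prod>j<K. real (M j))"
    using assms(2) by (simp add: prod_pos)
  moreover have "(\<Sum>w\<in>PiE {..<K} (\<lambda>j. {..<M j}). measure (noise n)
        {z \<in> space (noise n). dec k (received \<theta> K n enc w k z) \<noteq> w k})
      \<le> (\<Sum>w\<in>PiE {..<K} (\<lambda>j. {..<M j}). \<epsilon>)"
    by (rule sum_mono) (rule assms(1))
  then have "(\<Sum>w\<in>PiE {..<K} (\<lambda>j. {..<M j}). measure (noise n)
        {z \<in> space (noise n). dec k (received \<theta> K n enc w k z) \<noteq> w k})
      \<le> (\<Prod>j<K. real (M j)) * \<epsilon>"
    by (simp add: card)
  ultimately show ?thesis
    by (simp add: err_prob_def pos_divide_le_eq mult.commute)
qed

lemma err_prob_bpsk_le:
  assumes S: "S \<subseteq> {..<K}" and k: "k \<in> S" and weak: "weak_interference \<theta> S"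
    and code: "code_min_dist n (n div 8) (codebook_size n) (codebook n)"
  shows "err_prob \<theta> K n (\<lambda>k. msg_size n (rate_on S k)) (bpsk_encoder S n) (correlation_decoder S n) k
    \<le> codebook_size n * exp (- real (n div 8) / 4)"
proof (rule err_prob_le)
  interpret noise: prob_space "noise n" by (rule prob_space_noise)
  fix w assume "w \<in> PiE {..<K} (\<lambda>j. {..<msg_size n (rate_on S j)})"
  then have wk: "w k < codebook_size n"
    using S k by (auto simp: PiE_def Pi_def rate_on_def)
  have "measure (noise n) {z \<in> space (noise n).
        correlation_decoder S n k (received \<theta> K n (bpsk_encoder S n) w k z) \<noteq> w k}
      \<le> measure (noise n) (\<Union>v\<in>{..<codebook_size n} - {w k}. confusion_event n (w k) v)"
    by (rule noise.finite_measure_mono[OF decoding_error_subset[where w = w and n = n, OF S k weak wk]])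
      (auto intro: sets.finite_UN)
  also have "\<dots> \<le> (\<Sum>v\<in>{..<codebook_size n} - {w k}. measure (noise n) (confusion_event n (w k) v))"
    by (rule measure_UNION_le) auto
  also have "\<dots> \<le> (\<Sum>v\<in>{..<codebook_size n} - {w k}. exp (- real (n div 8) / 4))"
  proof (rule sum_mono)
    fix v assume "v \<in> {..<codebook_size n} - {w k}"
    then have "n div 8 \<le> card (disagreement n (w k) v)"
      using code wk by (auto simp: code_min_dist_def hamming_dist_def disagreement_def)
    then have "exp (- real (card (disagreement n (w k) v)) / 4) \<le> exp (- real (n div 8) / 4)"
      by simp
    with measure_confusion_event_le
    show "measure (noise n) (confusion_event n (w k) v) \<le> exp (- real (n div 8) / 4)"
      by (rule order.trans)
  qed
  also have "\<dots> \<le> codebook_size n * exp (- real (n div 8) / 4)"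
    using wk by (simp add: card_Diff_singleton)
  finally show "measure (noise n) {z \<in> space (noise n).
        correlation_decoder S n k (received \<theta> K n (bpsk_encoder S n) w k z) \<noteq> w k}
      \<le> codebook_size n * exp (- real (n div 8) / 4)" .
qed (rule msg_size_pos)

lemma correlation_measurable [measurable]:
  "correlation n w \<in> borel_measurable (PiM {..<n} (\<lambda>_. borel))"
  unfolding correlation_def by measurable

lemma correlation_decoder_measurable:
  "correlation_decoder S n k \<in> measurable (PiM {..<n} (\<lambda>_. borel)) (count_space UNIV)"
proof (cases "k \<in> S")
  case True
  let ?M = "PiM {..<n} (\<lambda>_. borel) :: (nat \<Rightarrow> complex) measure"
  let ?N = "codebook_size n"
  have "correlation_decoder S n k
      = (\<lambda>y. LEAST w. w < ?N \<and> (\<forall>w'<?N. correlation n w' y \<le> correlation n w y))"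
    using True by (simp add: correlation_decoder_def fun_eq_iff)
  also have "\<dots> \<in> measurable ?M (count_space UNIV)"
  proof (rule measurable_Least)
    fix w
    have le: "{y \<in> space ?M. correlation n w' y \<le> correlation n w y} \<in> sets ?M" for w'
      by (rule borel_measurable_le[OF correlation_measurable correlation_measurable])
    have "{y \<in> space ?M. w < ?N \<and> (\<forall>w'<?N. correlation n w' y \<le> correlation n w y)} \<in> sets ?M"
    proof (cases "w < ?N")
      case True
      then have "{y \<in> space ?M. w < ?N \<and> (\<forall>w'<?N. correlation n w' y \<le> correlation n w y)}
          = (\<Inter>w'\<in>{..<?N}. {y \<in> space ?M. correlation n w' y \<le> correlation n w y})"
        by auto
      also have "\<dots> \<in> sets ?M"
        using True by (intro sets.finite_INT le) auto
      finally show ?thesis .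
    qed simp
    then show "(\<lambda>y. w < ?N \<and> (\<forall>w'<?N. correlation n w' y \<le> correlation n w y))
        \<in> measurable ?M (count_space UNIV)"
      unfolding pred_def by assumption
  qed
  finally show ?thesis .
next
  case False
  then have "correlation_decoder S n k = (\<lambda>_. 0)"
    by (simp add: correlation_decoder_def fun_eq_iff)
  then show ?thesis
    by simp
qed

lemma is_code_bpsk:
  "is_code K n (\<lambda>k. msg_size n (rate_on S k)) (bpsk_encoder S n) (correlation_decoder S n)"
  unfolding is_code_def
proof (intro conjI allI impI)
  show "(cmod (bpsk_encoder S n k w t))\<^sup>2 \<le> 1" for k w t
    by (cases "k \<in> S"; cases "codebook n w t") (simp_all add: bpsk_encoder_def bpsk_def)
qed (rule correlation_decoder_measurable)

lemma err_prob_nonneg: "0 \<le> err_prob \<theta> K n M enc dec k"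
  unfolding err_prob_def by (intro divide_nonneg_nonneg sum_nonneg prod_nonneg) auto

lemma err_prob_bpsk_silent:
  assumes "k \<notin> S" and "k < K"
  shows "err_prob \<theta> K n (\<lambda>k. msg_size n (rate_on S k)) (bpsk_encoder S n) (correlation_decoder S n) k = 0"
proof -
  have "measure (noise n) {z \<in> space (noise n).
      correlation_decoder S n k (received \<theta> K n (bpsk_encoder S n) w k z) \<noteq> w k} = 0"
    if "w \<in> PiE {..<K} (\<lambda>j. {..<msg_size n (rate_on S j)})" for w
  proof -
    have "w k < msg_size n (rate_on S k)"
      using that assms(2) by (auto simp: PiE_def Pi_def)
    then show ?thesis
      using assms(1) by (simp add: rate_on_def msg_size_0 correlation_decoder_def)
  qed
  then show ?thesis
    unfolding err_prob_def by simp
qed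

lemma err_prob_bpsk_tendsto_0:
  assumes S: "S \<subseteq> {..<K}" and weak: "weak_interference \<theta> S" and "k < K"
  shows "(\<lambda>n. err_prob \<theta> K n (\<lambda>k. msg_size n (rate_on S k)) (bpsk_encoder S n) (correlation_decoder S n) k)
           \<longlonglongrightarrow> 0"
proof (cases "k \<in> S")
  case True
  have bound: "(\<lambda>n::nat. (2 powr (real n / 64) + 1) * exp (- (real n / 8 - 1) / 4)) \<longlonglongrightarrow> 0"
    by real_asymp
  have "eventually (\<lambda>n. err_prob \<theta> K n (\<lambda>k. msg_size n (rate_on S k)) (bpsk_encoder S n)
      (correlation_decoder S n) k \<le> (2 powr (real n / 64) + 1) * exp (- (real n / 8 - 1) / 4)) sequentially"
    using eventually_ge_at_top[of 8]
  proof eventually_elim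
    case (elim n)
    have "n < 8 * (n div 8) + 8"
      using div_mult_mod_eq[of n 8] mod_less_divisor[of 8 n] by linarith
    then have "real n < real (8 * (n div 8) + 8)"
      by (simp only: of_nat_less_iff)
    then have "exp (- real (n div 8) / 4) \<le> exp (- (real n / 8 - 1) / 4)"
      by simp
    then have "codebook_size n * exp (- real (n div 8) / 4)
        \<le> (2 powr (real n / 64) + 1) * exp (- (real n / 8 - 1) / 4)"
      using codebook_size_le[of n] by (intro mult_mono) auto
    with err_prob_bpsk_le[OF S True weak codebook_min_dist[OF elim]] show ?case
      by (rule order.trans)
  qed
  moreover have "eventually (\<lambda>n. 0 \<le> err_prob \<theta> K n (\<lambda>k. msg_size n (rate_on S k))
      (bpsk_encoder S n) (correlation_decoder S n) k) sequentially"
    by (simp add: err_prob_nonneg)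
  ultimately show ?thesis
    by (intro tendsto_sandwich[OF _ _ tendsto_const bound])
next
  case False
  show ?thesis
    unfolding err_prob_bpsk_silent[OF False \<open>k < K\<close>] by (rule tendsto_const)
qed

theorem achievable_sum_rate_weak_interference:
  assumes "S \<subseteq> {..<K}" and "weak_interference \<theta> S"
  shows "achievable_sum_rate \<theta> K (real (card S) / 64)"
proof -
  have "achievable_rates \<theta> K (rate_on S)"
    unfolding achievable_rates_def
  proof (intro conjI exI allI impI)
    show "0 \<le> rate_on S k" for k
      by (simp add: rate_on_def)
    show "is_code K n (\<lambda>k. msg_size n (rate_on S k)) (bpsk_encoder S n) (correlation_decoder S n)" for n
      by (rule is_code_bpsk)
    show "(\<lambda>n. err_prob \<theta> K n (\<lambda>k. msg_size n (rate_on S k)) (bpsk_encoder S n)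
        (correlation_decoder S n) k) \<longlonglongrightarrow> 0" if "k < K" for k
      using assms that by (rule err_prob_bpsk_tendsto_0)
  qed
  moreover have "(\<Sum>k<K. rate_on S k) = real (card S) / 64"
    using assms(1) by (simp add: rate_on_def sum.If_cases Int_absorb1)
  ultimately show ?thesis
    unfolding achievable_sum_rate_def by blast
qed

section \<open>Products of probability spaces\<close>

lemma indep_vars_PiM_components:
  assumes M: "\<And>i. i \<in> I \<Longrightarrow> prob_space (M i)"
  shows "prob_space.indep_vars (PiM I M) M (\<lambda>i \<omega>. \<omega> i) I"
proof -
  interpret prob_space "PiM I M" by (rule prob_space_PiM[OF M])
  show ?thesis
  proof (cases "I = {}")
    case True
    show ?thesis
      unfolding indep_vars_def indep_sets_def using True by simp
  next
    case False
    have "distr (PiM I M) (PiM I M) (\<lambda>\<omega>. \<lambda>i\<in>I. \<omega> i) = distr (PiM I M) (PiM I M) (\<lambda>\<omega>. \<omega>)"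
      by (rule distr_cong) (auto simp: space_PiM PiE_def extensional_def fun_eq_iff)
    also have "\<dots> = PiM I M"
      by (rule distr_id)
    also have "\<dots> = PiM I (\<lambda>i. distr (PiM I M) (M i) (\<lambda>\<omega>. \<omega> i))"
      by (rule PiM_cong) (auto intro!: distr_PiM_component[symmetric] M)
    finally show ?thesis
      using False by (subst indep_vars_iff_distr_eq_PiM') auto
  qed
qed

lemma PiM_box_eq_prod_emb:
  "{\<omega> \<in> space (PiM I M). \<forall>i\<in>J. \<omega> i \<in> A i} = prod_emb I M J (PiE J A)"
  by (auto simp: prod_emb_def space_PiM)

lemma measure_PiM_box:
  assumes M: "\<And>i. i \<in> I \<Longrightarrow> prob_space (M i)"
    and J: "J \<subseteq> I" "finite J" and A: "\<And>i. i \<in> J \<Longrightarrow> A i \<in> sets (M i)"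
  shows "measure (PiM I M) {\<omega> \<in> space (PiM I M). \<forall>i\<in>J. \<omega> i \<in> A i} = (\<Prod>i\<in>J. measure (M i) (A i))"
proof -
  interpret prob_space "PiM I M" by (rule prob_space_PiM[OF M])
  have "emeasure (PiM I M) {\<omega> \<in> space (PiM I M). \<forall>i\<in>J. \<omega> i \<in> A i} = (\<Prod>i\<in>J. emeasure (M i) (A i))"
    using J A M by (simp add: PiM_box_eq_prod_emb emeasure_PiM_emb subset_iff)
  also have "\<dots> = ennreal (\<Prod>i\<in>J. measure (M i) (A i))"
    using J M by (simp add: prob_space_def finite_measure.emeasure_eq_measure subset_iff prod_ennreal)
  finally show ?thesis
    by (simp add: emeasure_eq_measure prod_nonneg)
qed

lemma measure_PiM_box_missed:
  assumes M: "\<And>i. i \<in> I \<Longrightarrow> prob_space (M i)"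
    and J: "J \<subseteq> I" "finite J" and A: "\<And>i. i \<in> J \<Longrightarrow> A i \<in> sets (M i)"
  shows "measure (PiM I M) {\<omega> \<in> space (PiM I M). \<not> (\<forall>i\<in>J. \<omega> i \<in> A i)}
    = 1 - (\<Prod>i\<in>J. measure (M i) (A i))"
proof -
  interpret prob_space "PiM I M" by (rule prob_space_PiM[OF M])
  have "{\<omega> \<in> space (PiM I M). \<forall>i\<in>J. \<omega> i \<in> A i} \<in> events"
    unfolding PiM_box_eq_prod_emb using J A by (intro sets_PiM_I) auto
  then have "prob {\<omega> \<in> space (PiM I M). \<not> (\<forall>i\<in>J. \<omega> i \<in> A i)}
      = 1 - prob {\<omega> \<in> space (PiM I M). \<forall>i\<in>J. \<omega> i \<in> A i}"
    by (subst prob_compl[symmetric]) (auto intro: arg_cong[where f = prob])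
  then show ?thesis
    using measure_PiM_box[OF M J A] by simp
qed

text \<open>Boxes over pairwise disjoint sets of coordinates are independent events, hence so are
  their complements.\<close>
lemma measure_PiM_all_boxes_missed:
  assumes M: "\<And>i. i \<in> I \<Longrightarrow> prob_space (M i)"
    and U: "finite U" and J: "\<And>u. u \<in> U \<Longrightarrow> J u \<subseteq> I" "\<And>u. u \<in> U \<Longrightarrow> finite (J u)"
    and disj: "disjoint_family_on J U" and A: "\<And>i. i \<in> I \<Longrightarrow> A i \<in> sets (M i)"
  shows "measure (PiM I M) {\<omega> \<in> space (PiM I M). \<forall>u\<in>U. \<not> (\<forall>i\<in>J u. \<omega> i \<in> A i)}
    = (\<Prod>u\<in>U. 1 - (\<Prod>i\<in>J u. measure (M i) (A i)))"
proof -
  interpret prob_space "PiM I M" by (rule prob_space_PiM[OF M])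
  let ?X = "\<lambda>u \<omega>. restrict (\<lambda>i. \<omega> i) (J u)"
  let ?miss = "\<lambda>u. space (PiM (J u) M) - PiE (J u) A"
  have miss: "?X u -` ?miss u \<inter> space (PiM I M) = {\<omega> \<in> space (PiM I M). \<not> (\<forall>i\<in>J u. \<omega> i \<in> A i)}"
    if "u \<in> U" for u
    using J(1)[OF that] by (auto simp: space_PiM PiE_iff extensional_def) blast+
  show ?thesis
  proof (cases "U = {}")
    case False
    have "indep_vars (\<lambda>u. PiM (J u) M) ?X U"
      by (rule indep_vars_restrict[OF indep_vars_PiM_components[OF M] J(1) disj])
    moreover have "?miss u \<in> sets (PiM (J u) M)" if "u \<in> U" for u
      using J A that by (intro sets.Diff sets.top sets_PiM_I_finite) auto
    ultimately have "prob (\<Inter>u\<in>U. ?X u -` ?miss u \<inter> space (PiM I M))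
        = (\<Prod>u\<in>U. prob (?X u -` ?miss u \<inter> space (PiM I M)))"
      using False U by (intro indep_varsD_finite) auto
    moreover have "(\<Inter>u\<in>U. ?X u -` ?miss u \<inter> space (PiM I M))
        = {\<omega> \<in> space (PiM I M). \<forall>u\<in>U. \<not> (\<forall>i\<in>J u. \<omega> i \<in> A i)}"
      using False miss by auto
    ultimately show ?thesis
      using measure_PiM_box_missed[OF M J(1) J(2)] J(1) A by (simp add: miss subset_iff)
  qed (simp add: prob_space)
qed

section \<open>Random phases\<close>

abbreviation uniform_phase :: "real measure" where
  "uniform_phase \<equiv> uniform_measure lborel {-pi..<pi}"

lemma prob_space_uniform_phase: "prob_space uniform_phase"
  by (intro prob_space_uniform_measure) (use pi_gt_zero in auto)

lemma measure_uniform_phase_Icc: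
  assumes "-pi \<le> a" "a \<le> b" "b < pi"
  shows "measure uniform_phase {a..b} = (b - a) / (2 * pi)"
proof -
  have "{-pi..<pi} \<inter> {a..b} = {a..b}"
    using assms by auto
  then have "emeasure uniform_phase {a..b} = ennreal ((b - a) / (2 * pi))"
    using assms by (simp add: divide_ennreal[symmetric])
  then show ?thesis
    using assms by (simp add: measure_def)
qed

lemma prob_space_phase_measure: "prob_space (phase_measure K)"
  unfolding phase_measure_def by (rule prob_space_PiM) (rule prob_space_uniform_phase)

lemma sets_phase_measure_coordinate:
  assumes "B \<in> sets borel"
  shows "{\<theta> \<in> space (phase_measure K). \<theta> c \<in> B} \<in> sets (phase_measure K)"
proof (cases "c \<in> {..<K} \<times> {..<K}")
  case True
  then have "(\<lambda>\<theta>. \<theta> c) \<in> measurable (phase_measure K) borel"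
    unfolding phase_measure_def using measurable_component_singleton[OF True, of "\<lambda>_. uniform_phase"]
    by simp
  from measurable_sets[OF this assms] show ?thesis
    by (simp add: vimage_def Int_def conj_commute)
next
  case False
  have undefined: "\<theta> c = undefined" if "\<theta> \<in> space (phase_measure K)" for \<theta>
    using that False by (auto simp: phase_measure_def space_PiM intro: PiE_arb)
  have "\<theta> c \<in> B \<longleftrightarrow> undefined \<in> B" if "\<theta> \<in> space (phase_measure K)" for \<theta>
    by (simp only: undefined[OF that])
  then have "{\<theta> \<in> space (phase_measure K). \<theta> c \<in> B}
      = (if undefined \<in> B then space (phase_measure K) else {})"
    by auto
  then show ?thesis
    by simp
qed

text \<open>In an aligned set every direct phase lies in \<open>[0, 1/2]\<close> (direct gain at least \<open>3/4\<close>)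
  and every cross phase lies within \<open>\<eta>\<close> below \<open>\<pi>/2\<close> (cross gain at most \<open>\<eta>\<close>).\<close>
definition target_arc :: "real \<Rightarrow> nat \<times> nat \<Rightarrow> real set" where
  "target_arc \<eta> c = (if fst c = snd c then {0..1/2} else {pi/2 - \<eta>..pi/2})"

definition aligned :: "real \<Rightarrow> (nat \<times> nat \<Rightarrow> real) \<Rightarrow> nat set \<Rightarrow> bool" where
  "aligned \<eta> \<theta> S \<longleftrightarrow> (\<forall>k\<in>S. \<forall>j\<in>S. \<theta> (k, j) \<in> target_arc \<eta> (k, j))"

definition aligned_event :: "nat \<Rightarrow> nat \<Rightarrow> real \<Rightarrow> (nat \<times> nat \<Rightarrow> real) set" where
  "aligned_event K m \<eta> = {\<theta> \<in> space (phase_measure K).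
     \<exists>h. length h = m \<and> distinct h \<and> set h \<subseteq> {..<K} \<and> aligned \<eta> \<theta> (set h)}"

text \<open>The phases that must be checked when user \<open>u\<close> joins the users listed in \<open>h\<close>.\<close>
definition link_coords :: "nat list \<Rightarrow> nat \<Rightarrow> (nat \<times> nat) set" where
  "link_coords h u = insert (u, u) ((\<lambda>l. (u, l)) ` set h \<union> (\<lambda>l. (l, u)) ` set h)"

lemma aligned_list_greedy:
  assumes extend: "\<And>h. length h < m \<Longrightarrow> set h \<subseteq> {..<K} \<Longrightarrow>
      \<exists>u<K. u \<notin> set h \<and> (\<forall>c\<in>link_coords h u. \<theta> c \<in> target_arc \<eta> c)"
  shows "\<exists>h. length h = m \<and> distinct h \<and> set h \<subseteq> {..<K} \<and> aligned \<eta> \<theta> (set h)"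
proof -
  have "\<exists>h. length h = i \<and> distinct h \<and> set h \<subseteq> {..<K} \<and> aligned \<eta> \<theta> (set h)" if "i \<le> m" for i
    using that
  proof (induction i)
    case 0
    show ?case by (simp add: aligned_def)
  next
    case (Suc i)
    then obtain h where h: "length h = i" "distinct h" "set h \<subseteq> {..<K}" "aligned \<eta> \<theta> (set h)"
      by auto
    obtain u where "u < K" "u \<notin> set h" "\<forall>c\<in>link_coords h u. \<theta> c \<in> target_arc \<eta> c"
      using extend[of h] h Suc.prems by auto
    with h show ?case
      by (intro exI[of _ "u # h"]) (auto simp: aligned_def link_coords_def)
  qed
  then show ?thesis by simp
qed

lemma sets_target_arc [simp]: "target_arc \<eta> c \<in> sets borel"
  by (simp add: target_arc_def)

lemma sets_aligned_event: "aligned_event K m \<eta> \<in> sets (phase_measure K)"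
  unfolding aligned_event_def aligned_def
  by (intro sets.sets_Collect_countable_Ex sets.sets_Collect_conj sets.sets_Collect_const
      sets.sets_Collect_countable_Ball sets_phase_measure_coordinate sets_target_arc)

lemma card_link_coords_le: "card (link_coords h u) \<le> 1 + 2 * length h"
proof -
  have "card ((\<lambda>l. (u, l)) ` set h) \<le> length h" "card ((\<lambda>l. (l, u)) ` set h) \<le> length h"
    using card_image_le[of "set h"] card_length[of h] by (metis List.finite_set order_trans)+
  then show ?thesis
    unfolding link_coords_def
    using card_insert_le_m1[of _ "(\<lambda>l. (u, l)) ` set h \<union> (\<lambda>l. (l, u)) ` set h"]
      card_Un_le[of "(\<lambda>l. (u, l)) ` set h" "(\<lambda>l. (l, u)) ` set h"]
    by (simp add: card_insert_if)
qed

lemma measure_target_arc_ge: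
  assumes "0 < \<eta>" and "\<eta> \<le> 1/4"
  shows "\<eta> / (2 * pi) \<le> measure uniform_phase (target_arc \<eta> c)"
proof (cases "fst c = snd c")
  case True
  then have "target_arc \<eta> c = {0..1/2}"
    by (simp add: target_arc_def)
  then have "measure uniform_phase (target_arc \<eta> c) = (1/2 - 0) / (2 * pi)"
    using pi_gt3 by (simp only:) (intro measure_uniform_phase_Icc; simp)
  moreover have "\<eta> / (2 * pi) \<le> (1/2 - 0) / (2 * pi)"
    using assms pi_gt_zero by (intro divide_right_mono) auto
  ultimately show ?thesis
    by linarith
next
  case False
  then have "target_arc \<eta> c = {pi/2 - \<eta>..pi/2}"
    by (simp add: target_arc_def)
  then have "measure uniform_phase (target_arc \<eta> c) = (pi/2 - (pi/2 - \<eta>)) / (2 * pi)"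
    using assms pi_gt3 by (simp only:) (intro measure_uniform_phase_Icc; simp)
  then show ?thesis
    by simp
qed

lemma prod_measure_target_arcs_ge:
  assumes "length h < m" and "0 < \<eta>" "\<eta> \<le> 1/4"
  shows "(\<eta> / (2 * pi)) ^ (2 * m) \<le> (\<Prod>c\<in>link_coords h u. measure uniform_phase (target_arc \<eta> c))"
proof -
  have p: "0 < \<eta> / (2 * pi)" "\<eta> / (2 * pi) \<le> 1"
    using assms(2,3) pi_gt3 by (auto simp: field_simps)
  have "card (link_coords h u) \<le> 2 * m"
    using card_link_coords_le[of h u] assms(1) by linarith
  then have "(\<eta> / (2 * pi)) ^ (2 * m) \<le> (\<eta> / (2 * pi)) ^ card (link_coords h u)"
    using p by (intro power_decreasing) auto
  also have "\<dots> = (\<Prod>c\<in>link_coords h u. \<eta> / (2 * pi))"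
    by simp
  also have "\<dots> \<le> (\<Prod>c\<in>link_coords h u. measure uniform_phase (target_arc \<eta> c))"
    using measure_target_arc_ge[OF assms(2,3)] p by (intro prod_mono) auto
  finally show ?thesis .
qed

lemma measure_no_extension_le:
  assumes h: "set h \<subseteq> {..<K}" "length h < m" and \<eta>: "0 < \<eta>" "\<eta> \<le> 1/4"
  shows "measure (phase_measure K) {\<theta> \<in> space (phase_measure K).
      \<forall>u\<in>{..<K} - set h. \<not> (\<forall>c\<in>link_coords h u. \<theta> c \<in> target_arc \<eta> c)}
    \<le> (1 - (\<eta> / (2 * pi)) ^ (2 * m)) ^ (K - m)"
proof -
  interpret uniform_phase: prob_space uniform_phase by (rule prob_space_uniform_phase)
  define q where "q = (\<eta> / (2 * pi)) ^ (2 * m)"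
  define P where "P u = (\<Prod>c\<in>link_coords h u. measure uniform_phase (target_arc \<eta> c))" for u
  let ?U = "{..<K} - set h"
  have P: "q \<le> P u" "P u \<le> 1" for u
    unfolding q_def P_def using prod_measure_target_arcs_ge[OF h(2) \<eta>]
    by (blast intro: prod_le_1 measure_nonneg uniform_phase.prob_le_1)+
  have "measure (phase_measure K) {\<theta> \<in> space (phase_measure K).
        \<forall>u\<in>?U. \<not> (\<forall>c\<in>link_coords h u. \<theta> c \<in> target_arc \<eta> c)} = (\<Prod>u\<in>?U. 1 - P u)"
    unfolding phase_measure_def P_def using h(1) prob_space_uniform_phase
    by (intro measure_PiM_all_boxes_missed) (auto simp: link_coords_def disjoint_family_on_def)
  also have "\<dots> \<le> (\<Prod>u\<in>?U. 1 - q)"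
    using P by (intro prod_mono) auto
  also have "\<dots> \<le> (1 - q) ^ (K - m)"
  proof -
    have "card ?U = K - card (set h)"
      using h(1) by (simp add: card_Diff_subset)
    then have "K - m \<le> card ?U"
      using card_length[of h] h(2) by linarith
    moreover have "0 \<le> 1 - q" "1 - q \<le> 1"
      using P[of 0] \<eta> by (auto simp: q_def)
    ultimately show ?thesis
      by (simp add: power_decreasing)
  qed
  finally show ?thesis
    unfolding q_def .
qed

lemma card_lists_length_less_le:
  assumes "0 < K"
  shows "card {h. set h \<subseteq> {..<K} \<and> length h < m} \<le> m * K ^ m"
proof -
  have "{h. set h \<subseteq> {..<K} \<and> length h < m} = (\<Union>i<m. {h. set h \<subseteq> {..<K} \<and> length h = i})"
    by auto
  then have "card {h. set h \<subseteq> {..<K} \<and> length h < m} \<le> (\<Sum>i<m. K ^ i)"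
    using card_UN_le[of "{..<m}" "\<lambda>i. {h. set h \<subseteq> {..<K} \<and> length h = i}"]
    by (simp add: card_lists_length_eq)
  also have "\<dots> \<le> (\<Sum>i<m. K ^ m)"
    using assms by (intro sum_mono power_increasing) auto
  finally show ?thesis
    by simp
qed

lemma no_extension_if_not_aligned:
  assumes "\<theta> \<notin> aligned_event K m \<eta>" and "\<theta> \<in> space (phase_measure K)"
  shows "\<exists>h. set h \<subseteq> {..<K} \<and> length h < m \<and>
    (\<forall>u\<in>{..<K} - set h. \<not> (\<forall>c\<in>link_coords h u. \<theta> c \<in> target_arc \<eta> c))"
proof (rule ccontr)
  assume "\<nexists>h. set h \<subseteq> {..<K} \<and> length h < m \<and>
    (\<forall>u\<in>{..<K} - set h. \<not> (\<forall>c\<in>link_coords h u. \<theta> c \<in> target_arc \<eta> c))"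
  then have "\<exists>h. length h = m \<and> distinct h \<and> set h \<subseteq> {..<K} \<and> aligned \<eta> \<theta> (set h)"
    by (intro aligned_list_greedy) auto
  with assms show False
    by (simp add: aligned_event_def)
qed

text \<open>A union bound over the at most \<open>m K\<^sup>m\<close> partial selections.\<close>
lemma measure_not_aligned_le:
  assumes "0 < K" and "0 < \<eta>" "\<eta> \<le> 1/4"
  shows "measure (phase_measure K) (space (phase_measure K) - aligned_event K m \<eta>)
           \<le> real m * real K ^ m * (1 - (\<eta> / (2 * pi)) ^ (2 * m)) ^ (K - m)"
proof -
  interpret prob_space "phase_measure K" by (rule prob_space_phase_measure)
  let ?L = "{h. set h \<subseteq> {..<K} \<and> length h < m}"
  define E where "E h = {\<theta> \<in> space (phase_measure K).
    \<forall>u\<in>{..<K} - set h. \<not> (\<forall>c\<in>link_coords h u. \<theta> c \<in> target_arc \<eta> c)}" for h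
  have finite_L: "finite ?L"
    by (rule finite_subset[OF _ finite_lists_length_le[of "{..<K}" m]]) auto
  have E: "E h \<in> sets (phase_measure K)" for h
    unfolding E_def
    by (intro sets.sets_Collect_countable_Ball sets.sets_Collect_neg sets_phase_measure_coordinate
        sets_target_arc)
  have "space (phase_measure K) - aligned_event K m \<eta> \<subseteq> (\<Union>h\<in>?L. E h)"
    using no_extension_if_not_aligned by (fastforce simp: E_def)
  then have "measure (phase_measure K) (space (phase_measure K) - aligned_event K m \<eta>)
      \<le> measure (phase_measure K) (\<Union>h\<in>?L. E h)"
    using finite_L E by (intro finite_measure_mono) auto
  also have "\<dots> \<le> (\<Sum>h\<in>?L. measure (phase_measure K) (E h))"
    using finite_L E by (intro measure_UNION_le) auto
  also have "\<dots> \<le> (\<Sum>h\<in>?L. (1 - (\<eta> / (2 * pi)) ^ (2 * m)) ^ (K - m))"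
    unfolding E_def using assms(2,3) by (intro sum_mono measure_no_extension_le) auto
  also have "\<dots> \<le> real m * real K ^ m * (1 - (\<eta> / (2 * pi)) ^ (2 * m)) ^ (K - m)"
  proof -
    have "(\<eta> / (2 * pi)) ^ (2 * m) \<le> 1"
      using assms pi_gt3 by (intro power_le_one) (auto simp: field_simps)
    moreover have "real (card ?L) \<le> real m * real K ^ m"
      using card_lists_length_less_le[OF assms(1), of m] by (metis of_nat_le_iff of_nat_mult of_nat_power)
    ultimately show ?thesis
      by (simp add: mult_right_mono)
  qed
  finally show ?thesis .
qed

lemma cos_ge_three_quarters:
  assumes "x \<in> {0..1/2}"
  shows "3/4 \<le> cos (x::real)"
proof -
  have "cos (1/2::real) = 1 - 2 * (sin (1/4))\<^sup>2"
    using cos_double_sin[of "1/4::real"] by simp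
  moreover have "sin (1/4::real) \<le> 1/4"
    by (rule sin_x_le_x) simp
  moreover have "0 \<le> sin (1/4::real)"
    using pi_gt3 by (intro sin_ge_zero) auto
  ultimately have "3/4 \<le> cos (1/2::real)"
    using power_mono[of "sin (1/4::real)" "1/4" 2] by (simp add: power2_eq_square)
  also have "cos (1/2) \<le> cos x"
    using assms pi_gt3 by (intro cos_monotone_0_pi_le) auto
  finally show ?thesis .
qed

lemma abs_cos_le_near_half_pi:
  assumes "x \<in> {pi/2 - \<eta>..pi/2}" and "\<eta> \<le> 1"
  shows "\<bar>cos x\<bar> \<le> \<eta>"
proof -
  have "cos x = sin (pi/2 - x)"
    by (simp add: cos_sin_eq)
  moreover have "0 \<le> sin (pi/2 - x)"
    using assms pi_gt3 by (intro sin_ge_zero) auto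
  moreover have "sin (pi/2 - x) \<le> pi/2 - x"
    using assms by (intro sin_x_le_x) auto
  ultimately show ?thesis
    using assms by auto
qed

lemma aligned_imp_weak_interference:
  assumes "1 \<le> m" and "finite S" "card S \<le> m" and "aligned (1 / (4 * real m)) \<theta> S"
  shows "weak_interference \<theta> S"
  unfolding weak_interference_def
proof (intro ballI conjI)
  fix k assume k: "k \<in> S"
  then have "\<theta> (k, k) \<in> target_arc (1 / (4 * real m)) (k, k)"
    using assms(4) by (simp add: aligned_def)
  then show "3/4 \<le> cos (\<theta> (k, k))"
    by (intro cos_ge_three_quarters) (simp add: target_arc_def)
  have "\<theta> (k, j) \<in> {pi/2 - 1 / (4 * real m)..pi/2}" if j: "j \<in> S - {k}" for j
  proof -
    have "\<theta> (k, j) \<in> target_arc (1 / (4 * real m)) (k, j)"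
      using assms(4) k j by (simp add: aligned_def)
    with j show ?thesis
      by (simp add: target_arc_def)
  qed
  then have "(\<Sum>j\<in>S - {k}. \<bar>cos (\<theta> (k, j))\<bar>) \<le> (\<Sum>j\<in>S - {k}. 1 / (4 * real m))"
    using assms(1) by (intro sum_mono abs_cos_le_near_half_pi) auto
  also have "\<dots> = real (card S - 1) / (4 * real m)"
    using k assms(2) by (simp add: card_Diff_singleton)
  also have "\<dots> \<le> 1/4"
    using assms(1,3) by (simp add: field_simps)
  finally show "(\<Sum>j\<in>S - {k}. \<bar>cos (\<theta> (k, j))\<bar>) \<le> 1/4" .
qed

lemma aligned_event_achievable:
  assumes "1 \<le> m" and "\<theta> \<in> aligned_event K m (1 / (4 * real m))"
  shows "achievable_sum_rate \<theta> K (real m / 64)"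
proof -
  obtain h where h: "length h = m" "distinct h" "set h \<subseteq> {..<K}" "aligned (1 / (4 * real m)) \<theta> (set h)"
    using assms(2) by (auto simp: aligned_event_def)
  then have card: "card (set h) = m"
    by (simp add: distinct_card)
  then have "weak_interference \<theta> (set h)"
    using aligned_imp_weak_interference[OF assms(1) _ _ h(4)] by simp
  from achievable_sum_rate_weak_interference[OF h(3) this] show ?thesis
    by (simp add: card)
qed

section \<open>Asymptotics\<close>

lemma exp_le_pair_target_power:
  assumes "1 \<le> m" and "real m \<le> t" and "2 * t * ln (8 * pi * t) \<le> x / 2"
  shows "exp (- x / 2) \<le> (1 / (4 * real m) / (2 * pi)) ^ (2 * m)"
proof -
  have pos: "0 < 8 * pi * real m"
    using assms(1) by simp
  have "(1 / (4 * real m) / (2 * pi)) ^ (2 * m) = exp (- ln (8 * pi * real m)) ^ (2 * m)"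
    using pos by (simp add: exp_minus field_simps)
  also have "\<dots> = exp (- (2 * real m * ln (8 * pi * real m)))"
    by (simp flip: exp_of_nat_mult)
  finally have pair:
    "(1 / (4 * real m) / (2 * pi)) ^ (2 * m) = exp (- (2 * real m * ln (8 * pi * real m)))" .
  have "1 * 1 \<le> (8 * pi) * real m"
    using assms(1) pi_gt3 by (intro mult_mono) auto
  then have "0 \<le> ln (8 * pi * real m)"
    by simp
  moreover have "ln (8 * pi * real m) \<le> ln (8 * pi * t)"
    using assms(1,2) pos by (subst ln_le_cancel_iff) auto
  ultimately have "2 * real m * ln (8 * pi * real m) \<le> 2 * t * ln (8 * pi * t)"
    using assms(2) by (intro mult_mono) auto
  with assms(3) show ?thesis
    unfolding pair by simp
qed

lemma failure_bound_le:
  assumes "1 \<le> m" and "real m \<le> t" and "t \<le> real K" and "m \<le> K"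
    and "exp (- ln (real K) / 2) \<le> q" and "q \<le> 1"
  shows "real m * real K ^ m * (1 - q) ^ (K - m)
    \<le> t * exp (t * ln (real K)) * exp (- (real K - t) * exp (- ln (real K) / 2))"
proof -
  let ?e = "exp (- ln (real K) / 2)"
  have "0 < K"
    using assms(1,4) by simp
  have "real K ^ m = exp (ln (real K)) ^ m"
    using \<open>0 < K\<close> by simp
  also have "\<dots> = exp (real m * ln (real K))"
    by (rule exp_of_nat_mult[symmetric])
  also have "\<dots> \<le> exp (t * ln (real K))"
    using assms(2) \<open>0 < K\<close> by (simp add: mult_right_mono)
  finally have powK: "real K ^ m \<le> exp (t * ln (real K))" .
  have "(1 - q) ^ (K - m) \<le> exp (- q) ^ (K - m)"
    using assms(6) exp_ge_add_one_self[of "- q"] by (intro power_mono) auto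
  also have "\<dots> = exp (- (real (K - m) * q))"
    by (simp flip: exp_of_nat_mult)
  also have "\<dots> \<le> exp (- (real K - t) * ?e)"
  proof -
    have "(real K - t) * ?e \<le> real (K - m) * q"
      using assms by (intro mult_mono) (auto simp: of_nat_diff)
    moreover have "- (real K - t) * ?e = - ((real K - t) * ?e)"
      by (simp only: mult_minus_left)
    ultimately have "- (real (K - m) * q) \<le> - (real K - t) * ?e"
      by linarith
    then show ?thesis
      by (simp only: exp_le_cancel_iff)
  qed
  finally have "(1 - q) ^ (K - m) \<le> exp (- (real K - t) * ?e)" .
  with powK assms(2,6) show ?thesis
    by (intro mult_mono) auto
qed

text \<open>The constant \<open>8\<close> makes \<open>(8 \<pi> t)\<^sup>2\<^sup>t \<le> \<surd>K\<close> eventually, for \<open>t = selection_target K\<close>.\<close>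
definition selection_target :: "nat \<Rightarrow> real" where
  "selection_target K = ln (real K) / (8 * ln (ln (real K)))"

definition selection_size :: "nat \<Rightarrow> nat" where
  "selection_size K = nat \<lfloor>selection_target K\<rfloor>"

lemma eventually_selection_target:
  "eventually (\<lambda>K. 2 \<le> selection_target K \<and> selection_target K \<le> real K \<and>
     2 * selection_target K * ln (8 * pi * selection_target K) \<le> ln (real K) / 2) sequentially"
proof -
  have "eventually (\<lambda>K::nat. 2 \<le> ln (real K) / (8 * ln (ln (real K)))) sequentially"
    by real_asymp
  moreover have "eventually (\<lambda>K::nat. ln (real K) / (8 * ln (ln (real K))) \<le> real K) sequentially"
    by real_asymp
  moreover have "eventually (\<lambda>K::nat. 2 * (ln (real K) / (8 * ln (ln (real K))))
      * ln (8 * pi * (ln (real K) / (8 * ln (ln (real K))))) \<le> ln (real K) / 2) sequentially"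
    by real_asymp
  ultimately show ?thesis
    unfolding selection_target_def by eventually_elim blast
qed

lemma selection_size_bounds:
  assumes "2 \<le> selection_target K" and "selection_target K \<le> real K"
  shows "1 \<le> selection_size K" and "real (selection_size K) \<le> selection_target K"
    and "selection_target K \<le> 2 * real (selection_size K)" and "selection_size K \<le> K"
proof -
  have "real (selection_size K) \<le> selection_target K"
    and "selection_target K - 1 \<le> real (selection_size K)"
    using assms(1) by (simp_all add: selection_size_def)
  then show "1 \<le> selection_size K" "real (selection_size K) \<le> selection_target K"
    and "selection_target K \<le> 2 * real (selection_size K)" "selection_size K \<le> K"
    using assms by linarith+
qed

lemma pair_target_power_le_one:
  assumes "1 \<le> m"
  shows "(1 / (4 * real m) / (2 * pi)) ^ (2 * m) \<le> 1"
proof -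
  have "1 * 1 \<le> (8 * pi) * real m"
    using assms pi_gt3 by (intro mult_mono) auto
  then show ?thesis
    by (intro power_le_one) (auto simp: field_simps)
qed

definition selection_failure_bound :: "nat \<Rightarrow> real" where
  "selection_failure_bound K = selection_target K * exp (selection_target K * ln (real K))
     * exp (- (real K - selection_target K) * exp (- ln (real K) / 2))"

lemma measure_not_aligned_selection_le:
  assumes "2 \<le> selection_target K" "selection_target K \<le> real K"
    and "2 * selection_target K * ln (8 * pi * selection_target K) \<le> ln (real K) / 2"
  shows "measure (phase_measure K)
      (space (phase_measure K) - aligned_event K (selection_size K) (1 / (4 * real (selection_size K))))
    \<le> selection_failure_bound K"
proof -
  let ?m = "selection_size K"
  note m = selection_size_bounds[OF assms(1,2)]
  have "0 < K" "0 < 1 / (4 * real ?m)" "1 / (4 * real ?m) \<le> 1/4"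
    using m by auto
  then have "measure (phase_measure K) (space (phase_measure K) - aligned_event K ?m (1 / (4 * real ?m)))
      \<le> real ?m * real K ^ ?m * (1 - (1 / (4 * real ?m) / (2 * pi)) ^ (2 * ?m)) ^ (K - ?m)"
    by (rule measure_not_aligned_le)
  also have "\<dots> \<le> selection_failure_bound K"
    unfolding selection_failure_bound_def
    using assms m pair_target_power_le_one[OF m(1)]
      exp_le_pair_target_power[of ?m "selection_target K" "ln (real K)"]
    by (intro failure_bound_le) auto
  finally show ?thesis .
qed

lemma prob_aligned_event_tendsto_1:
  "(\<lambda>K. measure (phase_measure K) (aligned_event K (selection_size K) (1 / (4 * real (selection_size K)))))
     \<longlonglongrightarrow> 1"
proof (rule tendsto_sandwich)
  have "selection_failure_bound \<longlonglongrightarrow> 0"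
    unfolding selection_failure_bound_def selection_target_def by real_asymp
  then have "(\<lambda>K. 1 - selection_failure_bound K) \<longlonglongrightarrow> 1 - 0"
    by (intro tendsto_intros)
  then show "(\<lambda>K. 1 - selection_failure_bound K) \<longlonglongrightarrow> 1"
    by simp
  show "eventually (\<lambda>K. 1 - selection_failure_bound K \<le> measure (phase_measure K)
      (aligned_event K (selection_size K) (1 / (4 * real (selection_size K))))) sequentially"
    using eventually_selection_target
  proof eventually_elim
    case (elim K)
    interpret prob_space "phase_measure K" by (rule prob_space_phase_measure)
    from elim measure_not_aligned_selection_le[of K] show ?case
      by (simp add: prob_compl sets_aligned_event)
  qed
  show "eventually (\<lambda>K. measure (phase_measure K)
      (aligned_event K (selection_size K) (1 / (4 * real (selection_size K)))) \<le> 1) sequentially"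
    by (simp add: prob_space.prob_le_1 prob_space_phase_measure)
qed (rule tendsto_const)

lemma ex_events_subset_prob_tendsto_1:
  assumes "\<And>K. B K \<in> sets (M K)" and "eventually (\<lambda>K. B K \<subseteq> P K) sequentially"
    and "(\<lambda>K. measure (M K) (B K)) \<longlonglongrightarrow> 1"
  shows "\<exists>A. (\<forall>K. A K \<in> sets (M K) \<and> A K \<subseteq> P K) \<and> (\<lambda>K. measure (M K) (A K)) \<longlonglongrightarrow> 1"
proof -
  obtain K0 where K0: "\<And>K. K0 \<le> K \<Longrightarrow> B K \<subseteq> P K"
    using assms(2) by (auto simp: eventually_sequentially)
  define A where "A K = (if K0 \<le> K then B K else {})" for K
  have "\<forall>K. A K \<in> sets (M K) \<and> A K \<subseteq> P K"
    using assms(1) K0 by (simp add: A_def)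
  moreover have "eventually (\<lambda>K. measure (M K) (B K) = measure (M K) (A K)) sequentially"
    using eventually_ge_at_top[of K0] by eventually_elim (simp add: A_def)
  with assms(3) have "(\<lambda>K. measure (M K) (A K)) \<longlonglongrightarrow> 1"
    by (rule Lim_transform_eventually)
  ultimately show ?thesis
    by blast
qed

lemma eventually_aligned_event_achievable:
  "eventually (\<lambda>K. aligned_event K (selection_size K) (1 / (4 * real (selection_size K)))
     \<subseteq> {\<theta> \<in> space (phase_measure K).
          \<exists>S. S \<ge> 1/1024 * ln (real K) / ln (ln (real K)) \<and> achievable_sum_rate \<theta> K S}) sequentially"
  using eventually_selection_target
proof eventually_elim
  case (elim K)
  note m = selection_size_bounds[of K]
  have "0 \<le> ln (real K)"
    by (cases "K = 0") auto
  moreover have "0 < ln (real K) / (8 * ln (ln (real K)))"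
    using elim by (simp add: selection_target_def)
  ultimately have "0 < ln (ln (real K))"
    by (auto simp: zero_less_divide_iff)
  then have "1/1024 * ln (real K) / ln (ln (real K)) = selection_target K / 128"
    by (simp add: selection_target_def field_simps)
  also have "\<dots> \<le> real (selection_size K) / 64"
    using elim m by simp
  finally have rate: "1/1024 * ln (real K) / ln (ln (real K)) \<le> real (selection_size K) / 64" .
  have "1 \<le> selection_size K"
    using elim m by simp
  show ?case
  proof
    fix \<theta> assume \<theta>: "\<theta> \<in> aligned_event K (selection_size K) (1 / (4 * real (selection_size K)))"
    with \<open>1 \<le> selection_size K\<close> have "achievable_sum_rate \<theta> K (real (selection_size K) / 64)"
      by (rule aligned_event_achievable)
    moreover have "\<theta> \<in> space (phase_measure K)"
      using \<theta> by (simp add: aligned_event_def)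
    ultimately show "\<theta> \<in> {\<theta> \<in> space (phase_measure K).
        \<exists>S. S \<ge> 1/1024 * ln (real K) / ln (ln (real K)) \<and> achievable_sum_rate \<theta> K S}"
      using rate by blast
  qed
qed

theorem theorem1:
  shows "\<exists>c > 0. \<exists>A :: nat \<Rightarrow> (nat \<times> nat \<Rightarrow> real) set.
           (\<forall>K. A K \<in> sets (phase_measure K) \<and>
                A K \<subseteq> {\<theta> \<in> space (phase_measure K).
                          \<exists>S. S \<ge> c * ln (real K) / ln (ln (real K)) \<and> achievable_sum_rate \<theta> K S}) \<and>
           (\<lambda>K. measure (phase_measure K) (A K)) \<longlonglongrightarrow> 1"
proof (intro exI[of _ "1/1024"] conjI)
  show "\<exists>A. (\<forall>K. A K \<in> sets (phase_measure K) \<and>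
                A K \<subseteq> {\<theta> \<in> space (phase_measure K).
                          \<exists>S. S \<ge> 1/1024 * ln (real K) / ln (ln (real K)) \<and> achievable_sum_rate \<theta> K S}) \<and>
           (\<lambda>K. measure (phase_measure K) (A K)) \<longlonglongrightarrow> 1"
    using sets_aligned_event eventually_aligned_event_achievable prob_aligned_event_tendsto_1
    by (rule ex_events_subset_prob_tendsto_1)
qed simp

end
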